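(* Let $F(\boldsymbol\theta)=Z(\boldsymbol\theta)+W(\boldsymbol\theta)\mathbf j$ with $Z,W\in L^1(\mathbb T^d;\mathbb C_{\mathbf i}^{s\times s})$, and fix an ordered partition $S_L\dot\cup S_R=\{1,\dots,d\}$. The following are equivalent: (i) $T^{(S_L,S_R)}_{\boldsymbol n}(F)$ is Hermitian for all $\boldsymbol n\in\mathbb N^d$; (ii) $Z(\boldsymbol\theta)$ is Hermitian for a.e. $\boldsymbol\theta\in\mathbb T^d$ and $W(-\boldsymbol\theta)=-W(\boldsymbol\theta)^{\mathsf T}$ for a.e. $\boldsymbol\theta\in\mathbb T^d$. In particular, whether (i) holds does not depend on the choice of the ordered partition.
   Context: $\mathbb H$ is the quaternion algebra with units $\mathbf i,\mathbf j,\mathbf k=\mathbf i\mathbf j$; $\mathbb C_{\mathbf i}=\operatorname{span}_{\mathbb R}\{1,\mathbf i\}\cong\mathbb C$. A quaternion matrix $X$ is Hermitian if $X=X^*$ (quaternion conjugate transpose). $\mathbb T^d=[-\pi,\pi)^d$; $\langle\boldsymbol k,\boldsymbol\theta\rangle_S=\sum_{j\in S}k_j\theta_j$. Sandwich Fourier coefficients: $\widehat F^{(S_L,S_R)}(\boldsymbol k)=(2\pi)^{-d}\int_{\mathbb T^d}e^{-\mathbf i\langle\boldsymbol k,\boldsymbol\theta\rangle_{S_L}}F(\boldsymbol\theta)e^{-\mathbf i\langle\boldsymbol k,\boldsymbol\theta\rangle_{S_R}}d\boldsymbol\theta$; $T^{(S_L,S_R)}_{\boldsymbol n}(F)=[\widehat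 F^{(S_L,S_R)}(\alpha-\beta)]_{\alpha,\beta\in\Lambda_{\boldsymbol n}}$, $\Lambda_{\boldsymbol n}=\prod_\ell\{0,\dots,n_\ell-1\}$ in lexicographic order. *)

theory Defs
  imports "HOL-Analysis.Analysis"
begin

text \<open>Quaternions, represented as z + w j with z, w in C_i (the copy of C spanned by 1, i).
  Multiplication follows from j z = cnj z j and j j = -1.\<close>

datatype quat = Quat (qz: complex) (qw: complex)

definition qmul :: "quat \<Rightarrow> quat \<Rightarrow> quat" where
  "qmul p q = Quat (qz p * qz q - qw p * cnj (qw q)) (qz p * qw q + qw p * cnj (qz q))"

definition qcnj :: "quat \<Rightarrow> quat" where
  "qcnj q = Quat (cnj (qz q)) (- qw q)"

definition qof_complex :: "complex \<Rightarrow> quat" where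
  "qof_complex c = Quat c 0"

definition torus :: "(real^'d) set" where
  "torus = {\<theta>. \<forall>i. - pi \<le> \<theta> $ i \<and> \<theta> $ i < pi}"

definition ipS :: "'d set \<Rightarrow> int^'d \<Rightarrow> real^'d \<Rightarrow> real" where
  "ipS S k \<theta> = (\<Sum>j\<in>S. of_int (k $ j) * \<theta> $ j)"

definition qmatF :: "(real^'d \<Rightarrow> complex^'s^'s) \<Rightarrow> (real^'d \<Rightarrow> complex^'s^'s)
    \<Rightarrow> real^'d \<Rightarrow> 's \<Rightarrow> 's \<Rightarrow> quat" where
  "qmatF Z W \<theta> p q = Quat (Z \<theta> $ p $ q) (W \<theta> $ p $ q)"

text \<open>Sandwich Fourier coefficient (S_L = SL, S_R = complement of SL), integral taken
  componentwise (quaternion = C_i + C_i j).\<close>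
definition sandwich_integrand :: "'d set \<Rightarrow> (real^'d \<Rightarrow> complex^'s^'s) \<Rightarrow> (real^'d \<Rightarrow> complex^'s^'s)
    \<Rightarrow> int^'d \<Rightarrow> 's \<Rightarrow> 's \<Rightarrow> real^'d \<Rightarrow> quat" where
  "sandwich_integrand SL Z W k p q \<theta> =
     qmul (qmul (qof_complex (exp (- \<i> * of_real (ipS SL k \<theta>)))) (qmatF Z W \<theta> p q))
          (qof_complex (exp (- \<i> * of_real (ipS (- SL) k \<theta>))))"

definition sandwich_coeff :: "'d set \<Rightarrow> (real^'d \<Rightarrow> complex^'s^'s) \<Rightarrow> (real^'d \<Rightarrow> complex^'s^'s)
    \<Rightarrow> int^'d \<Rightarrow> 's \<Rightarrow> 's \<Rightarrow> quat" where
  "sandwich_coeff SL Z W k p q =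
     (let c = complex_of_real (1 / (2 * pi) ^ CARD('d)) in
      Quat (c * integral torus (\<lambda>\<theta>. qz (sandwich_integrand SL Z W k p q \<theta>)))
           (c * integral torus (\<lambda>\<theta>. qw (sandwich_integrand SL Z W k p q \<theta>))))"

definition Lambda :: "nat^'d \<Rightarrow> (nat^'d) set" where
  "Lambda n = {\<alpha>. \<forall>l. \<alpha> $ l < n $ l}"

definition idx_diff :: "nat^'d \<Rightarrow> nat^'d \<Rightarrow> int^'d" where
  "idx_diff \<alpha> \<beta> = (\<chi> l. int (\<alpha> $ l) - int (\<beta> $ l))"

text \<open>Multilevel block Toeplitz matrix T_n^{(S_L,S_R)}(F); rows/columns indexed by
  (alpha, p) with alpha in Lambda_n and p an s-index (block (alpha,beta) = coefficient at alpha-beta).\<close>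
definition toeplitzQ :: "'d set \<Rightarrow> (real^'d \<Rightarrow> complex^'s^'s) \<Rightarrow> (real^'d \<Rightarrow> complex^'s^'s)
    \<Rightarrow> ((nat^'d) \<times> 's) \<Rightarrow> ((nat^'d) \<times> 's) \<Rightarrow> quat" where
  "toeplitzQ SL Z W x y = sandwich_coeff SL Z W (idx_diff (fst x) (fst y)) (snd x) (snd y)"

definition qhermitian :: "'i set \<Rightarrow> ('i \<Rightarrow> 'i \<Rightarrow> quat) \<Rightarrow> bool" where
  "qhermitian I M \<longleftrightarrow> (\<forall>x\<in>I. \<forall>y\<in>I. M x y = qcnj (M y x))"

definition all_toeplitz_hermitian :: "'d set \<Rightarrow> (real^'d \<Rightarrow> complex^'s^'s) \<Rightarrow> (real^'d \<Rightarrow> complex^'s^'s) \<Rightarrow> bool" where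
  "all_toeplitz_hermitian SL Z W \<longleftrightarrow>
     (\<forall>n::nat^'d. (\<forall>l. 1 \<le> n $ l) \<longrightarrow> qhermitian (Lambda n \<times> UNIV) (toeplitzQ SL Z W))"

end

theory Submission
  imports Defs
begin

text \<open>Since \<open>j z = cnj z j\<close>, the sandwich coefficient of \<open>F = Z + W j\<close> at \<open>k\<close> is, up to the
  factor \<open>(2 pi)^-d\<close>, the pair \<open>(Z^(k), W^(\<sigma> k))\<close> of ordinary Fourier coefficients, where \<open>\<sigma>\<close>
  negates the components of \<open>k\<close> outside \<open>S_L\<close>. Hence every \<open>T_n\<close> is Hermitian iff the coefficients
  satisfy \<open>c(k) = c(-k)^*\<close>, i.e. iff all Fourier coefficients of \<open>Z - Z^*\<close> and of
  \<open>W(\<theta>) + W(-\<theta>)^T\<close> vanish; as \<open>\<sigma>\<close> is a bijection, \<open>S_L\<close> drops out. What remains is the uniqueness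
  theorem for Fourier coefficients of integrable functions on the torus. If all of them vanish,
  Stone-Weierstrass (applied on the polycircle, the image of \<open>\<theta> \<mapsto> (e^(i \<theta>_j))_j\<close>) makes the
  integral against every continuous function vanish; dominated convergence passes to indicators
  of boxes, Dynkin's theorem to all measurable sets, and then the function vanishes a.e.\<close>

subsection \<open>Trigonometric polynomials are dense in the continuous functions on the torus\<close>

definition torus_char :: "int^'d \<Rightarrow> real^'d \<Rightarrow> complex" where
  "torus_char k \<theta> = exp (\<i> * of_real (ipS UNIV k \<theta>))"

definition trig_poly :: "(complex \<times> (int^'d)) list \<Rightarrow> real^'d \<Rightarrow> complex" where
  "trig_poly L \<theta> = (\<Sum>(c, k)\<leftarrow>L. c * torus_char k \<theta>)"

definition trig_poly_times ::
    "(complex \<times> (int^'d)) list \<Rightarrow> (complex \<times> (int^'d)) list \<Rightarrow> (complex \<times> (int^'d)) list" where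
  "trig_poly_times L M = concat (map (\<lambda>(c, k). map (\<lambda>(d, m). (c * d, k + m)) M) L)"

definition cis_vec :: "real^'d \<Rightarrow> complex^'d" where
  "cis_vec \<theta> = (\<chi> j. cis (\<theta> $ j))"

definition polycircle :: "(complex^'d) set" where
  "polycircle = {y. \<forall>j. norm (y $ j) = 1}"

definition trig_real_fns :: "(complex^'d \<Rightarrow> real) set" where
  "trig_real_fns = {P. continuous_on polycircle P \<and>
     (\<exists>L. \<forall>\<theta>. complex_of_real (P (cis_vec \<theta>)) = trig_poly L \<theta>)}"

definition unit_index :: "'d \<Rightarrow> int^'d" where
  "unit_index j = (\<chi> l. if l = j then 1 else 0)"

lemma ipS_add: "ipS S (k + m) \<theta> = ipS S k \<theta> + ipS S m \<theta>"
  by (simp add: ipS_def sum.distrib distrib_right)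

lemma ipS_uminus: "ipS S (- k) \<theta> = - ipS S k \<theta>"
  by (simp add: ipS_def sum_negf)

lemma ipS_uminus_right: "ipS S k (- \<theta>) = - ipS S k \<theta>"
  by (simp add: ipS_def sum_negf)

lemma ipS_unit_index: "ipS UNIV (unit_index j) \<theta> = \<theta> $ j"
proof -
  have "ipS UNIV (unit_index j) \<theta> = (\<Sum>l\<in>UNIV. if l = j then \<theta> $ l else 0)"
    unfolding ipS_def by (rule sum.cong) (auto simp: unit_index_def)
  then show ?thesis by simp
qed

lemma torus_char_add: "torus_char (k + m) \<theta> = torus_char k \<theta> * torus_char m \<theta>"
  by (simp add: torus_char_def ipS_add distrib_left exp_add)

lemma norm_torus_char [simp]: "norm (torus_char k \<theta>) = 1"
  by (simp add: torus_char_def)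

lemma continuous_on_torus_char: "continuous_on UNIV (torus_char k)"
  unfolding torus_char_def ipS_def by (intro continuous_intros)

lemma torus_char_unit_index: "torus_char (unit_index j) \<theta> = cis (\<theta> $ j)"
  and torus_char_uminus_unit_index: "torus_char (- unit_index j) \<theta> = cis (- (\<theta> $ j))"
  by (simp_all add: torus_char_def ipS_uminus ipS_unit_index cis_conv_exp)

lemma trig_poly_Nil [simp]: "trig_poly [] \<theta> = 0"
  and trig_poly_Cons [simp]: "trig_poly ((c, k) # L) \<theta> = c * torus_char k \<theta> + trig_poly L \<theta>"
  and trig_poly_append: "trig_poly (L @ M) \<theta> = trig_poly L \<theta> + trig_poly M \<theta>"
  by (simp_all add: trig_poly_def)

lemma trig_poly_times: "trig_poly (trig_poly_times L M) \<theta> = trig_poly L \<theta> * trig_poly M \<theta>"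
proof (induction L)
  case Nil
  then show ?case by (simp add: trig_poly_times_def)
next
  case (Cons a L)
  obtain c k where a: "a = (c, k)" by force
  have "trig_poly (map (\<lambda>(d, m). (c * d, k + m)) M) \<theta> = c * torus_char k \<theta> * trig_poly M \<theta>"
    by (induction M) (auto simp: torus_char_add algebra_simps)
  with Cons show ?case
    by (simp add: a trig_poly_times_def trig_poly_append distrib_right)
qed

lemma compact_polycircle: "compact polycircle"
proof (rule compact_eq_bounded_closed[THEN iffD2], rule conjI)
  show "bounded polycircle"
    unfolding bounded_iff
  proof (intro exI ballI)
    fix y :: "complex^'d" assume "y \<in> polycircle"
    have "norm y \<le> (\<Sum>i\<in>UNIV. norm (y $ i))"
      by (simp add: norm_vec_def L2_set_le_sum)
    also have "\<dots> = real CARD('d)" using \<open>y \<in> polycircle\<close> by (simp add: polycircle_def)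
    finally show "norm y \<le> real CARD('d)" .
  qed
  show "closed polycircle" unfolding polycircle_def
    by (intro closed_Collect_all closed_Collect_eq continuous_intros)
qed

lemma cis_vec_in_polycircle [simp]: "cis_vec \<theta> \<in> polycircle"
  by (simp add: cis_vec_def polycircle_def)

lemma continuous_on_cis_vec: "continuous_on UNIV cis_vec"
  unfolding cis_vec_def by (intro continuous_intros)

lemma Re_component_in_trig_real_fns: "(\<lambda>y. Re (y $ j)) \<in> trig_real_fns"
  and Im_component_in_trig_real_fns: "(\<lambda>y. Im (y $ j)) \<in> trig_real_fns"
  for j :: "'d::finite"
proof -
  have "\<forall>\<theta>. complex_of_real (Re (cis_vec \<theta> $ j)) = trig_poly [(1/2, unit_index j), (1/2, - unit_index j)] \<theta>"
    and "\<forall>\<theta>. complex_of_real (Im (cis_vec \<theta> $ j)) = trig_poly [(- \<i>/2, unit_index j), (\<i>/2, - unit_index j)] \<theta>"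
    by (simp_all add: torus_char_unit_index torus_char_uminus_unit_index cis_vec_def complex_eq_iff)
  moreover have "continuous_on polycircle (\<lambda>y. Re (y $ j))" "continuous_on polycircle (\<lambda>y. Im (y $ j))"
    by (intro continuous_intros)+
  ultimately show "(\<lambda>y. Re (y $ j)) \<in> trig_real_fns" "(\<lambda>y. Im (y $ j)) \<in> trig_real_fns"
    unfolding trig_real_fns_def by blast+
qed

interpretation trig_real_fns: function_ring_on "trig_real_fns :: (complex^'d \<Rightarrow> real) set" polycircle
proof
  show "compact polycircle" by (rule compact_polycircle)
next
  fix f :: "complex^'d \<Rightarrow> real" assume "f \<in> trig_real_fns"
  then show "continuous_on polycircle f" by (simp add: trig_real_fns_def)
next
  fix f g :: "complex^'d \<Rightarrow> real" assume f: "f \<in> trig_real_fns" and g: "g \<in> trig_real_fns"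
  then obtain L M where L: "\<forall>\<theta>. complex_of_real (f (cis_vec \<theta>)) = trig_poly L \<theta>"
    and M: "\<forall>\<theta>. complex_of_real (g (cis_vec \<theta>)) = trig_poly M \<theta>"
    by (auto simp: trig_real_fns_def)
  show "(\<lambda>x. f x + g x) \<in> trig_real_fns" using f g L M
    by (auto simp: trig_real_fns_def trig_poly_append intro!: continuous_intros exI[of _ "L @ M"])
  show "(\<lambda>x. f x * g x) \<in> trig_real_fns" using f g L M
    by (auto simp: trig_real_fns_def trig_poly_times
        intro!: continuous_intros exI[of _ "trig_poly_times L M"])
next
  fix c :: real
  show "(\<lambda>_. c) \<in> trig_real_fns"
    by (auto simp: trig_real_fns_def torus_char_def ipS_def intro!: exI[of _ "[(of_real c, 0)]"])
next
  fix x y :: "complex^'d" assume "x \<in> polycircle" "y \<in> polycircle" "x \<noteq> y"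
  then obtain j where "x $ j \<noteq> y $ j"
    by (metis vec_eq_iff)
  then have "Re (x $ j) \<noteq> Re (y $ j) \<or> Im (x $ j) \<noteq> Im (y $ j)"
    by (simp add: complex_eq_iff)
  then show "\<exists>f\<in>trig_real_fns. f x \<noteq> f y"
  proof
    assume "Re (x $ j) \<noteq> Re (y $ j)"
    with Re_component_in_trig_real_fns show ?thesis by (intro bexI[of _ "\<lambda>y. Re (y $ j)"])
  next
    assume "Im (x $ j) \<noteq> Im (y $ j)"
    with Im_component_in_trig_real_fns show ?thesis by (intro bexI[of _ "\<lambda>y. Im (y $ j)"])
  qed
qed

lemma trig_poly_approx:
  fixes G :: "complex^'d \<Rightarrow> real"
  assumes "continuous_on polycircle G" "e > 0"
  obtains L where "\<And>\<theta>. norm (complex_of_real (G (cis_vec \<theta>)) - trig_poly L \<theta>) < e"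
proof -
  obtain P where P: "P \<in> trig_real_fns" "\<forall>x\<in>polycircle. \<bar>G x - P x\<bar> < e"
    using trig_real_fns.Stone_Weierstrass_basic[OF assms] by blast
  then obtain L where "\<forall>\<theta>. complex_of_real (P (cis_vec \<theta>)) = trig_poly L \<theta>"
    by (auto simp: trig_real_fns_def)
  then have "norm (complex_of_real (G (cis_vec \<theta>)) - trig_poly L \<theta>) < e" for \<theta>
    using P(2) cis_vec_in_polycircle by (metis norm_of_real of_real_diff)
  then show ?thesis by (rule that)
qed

subsection \<open>Uniqueness of Fourier coefficients\<close>

definition pi_vec :: "real^'d" where
  "pi_vec = (\<chi> j. pi)"

definition open_torus :: "(real^'d) set" where
  "open_torus = box (- pi_vec) pi_vec"

lemma mem_open_torus: "\<theta> \<in> open_torus \<longleftrightarrow> (\<forall>j. - pi < \<theta> $ j \<and> \<theta> $ j < pi)"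
  by (simp add: open_torus_def mem_box_cart pi_vec_def)

lemma open_torus_subset_torus: "open_torus \<subseteq> torus"
  by (auto simp: mem_open_torus torus_def less_imp_le)

lemma torus_subset_cbox: "torus \<subseteq> cbox (- pi_vec) pi_vec"
  by (auto simp: torus_def mem_box_cart pi_vec_def less_imp_le)

lemma negligible_torus_diff_open_torus: "negligible (torus - open_torus)"
  by (rule negligible_subset[OF negligible_frontier_interval[of "- pi_vec" pi_vec]])
     (unfold open_torus_def, rule Diff_mono[OF torus_subset_cbox order_refl])

lemma negligible_cbox_diff_torus: "negligible (cbox (- pi_vec) pi_vec - torus)"
  by (rule negligible_subset[OF negligible_frontier_interval[of "- pi_vec" pi_vec]])
     (rule Diff_mono[OF order_refl open_torus_subset_torus[unfolded open_torus_def]])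

lemma open_torus_sets_lebesgue [measurable]: "open_torus \<in> sets lebesgue"
  by (simp add: open_torus_def)

lemma cis_mem_arc_iff:
  fixes t a b :: real
  assumes t: "- pi < t" "t < pi" and ab: "- pi \<le> a" "b \<le> pi"
  shows "cis t \<in> cis ` {b..a + 2 * pi} \<longleftrightarrow> \<not> (a < t \<and> t < b)"
proof
  assume "cis t \<in> cis ` {b..a + 2 * pi}"
  then obtain s where s: "s \<in> {b..a + 2 * pi}" "cis t = cis s" by blast
  then obtain n :: int where "\<i> * complex_of_real t = \<i> * complex_of_real s + (of_int (2 * n) * pi) * \<i>"
    by (auto simp: cis_conv_exp exp_eq)
  then have "\<i> * complex_of_real t = \<i> * complex_of_real (s + 2 * real_of_int n * pi)"
    by (simp add: algebra_simps)
  then have n: "t = s + 2 * real_of_int n * pi"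
    by (simp only: mult_cancel_left of_real_eq_iff) simp
  show "\<not> (a < t \<and> t < b)"
  proof
    assume "a < t \<and> t < b"
    with n s(1) have "pi * (- 1) < pi * real_of_int n" "pi * real_of_int n < pi * 0"
      by (simp_all add: algebra_simps)
    then have "- 1 < n" "n < 0"
      using mult_less_cancel_left_pos[OF pi_gt_zero] by (metis of_int_less_iff of_int_minus of_int_1 of_int_0)+
    then show False by linarith
  qed
next
  assume "\<not> (a < t \<and> t < b)"
  then consider "t \<le> a" | "t \<in> {b..a + 2 * pi}"
    using t ab by fastforce
  then show "cis t \<in> cis ` {b..a + 2 * pi}"
  proof cases
    case 1
    have "cis t = cis (t + 2 * pi)" by (simp add: complex_eq_iff)
    moreover have "t + 2 * pi \<in> {b..a + 2 * pi}" using 1 t ab by auto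
    ultimately show ?thesis by blast
  qed blast
qed

lemma continuous_imp_borel_measurable_lebesgue:
  "continuous_on UNIV g \<Longrightarrow> g \<in> borel_measurable lebesgue"
  by (metis borel_measurable_continuous_onI measurable_completion measurable_lborel2)

lemma sigma_finite_lebesgue: "sigma_finite_measure (lebesgue :: 'a::euclidean_space measure)"
proof -
  obtain A :: "'a set set" where "countable A" "A \<subseteq> sets lborel" "\<Union>A = space lborel"
    "\<forall>a\<in>A. emeasure lborel a \<noteq> \<infinity>"
    using lborel.sigma_finite_countable by blast
  then show ?thesis
    unfolding sigma_finite_measure_def
    by (intro exI[of _ A]) (auto simp: emeasure_completion sets_completionI_sets)
qed

lemma integrable_bounded_times:
  fixes f :: "'a::euclidean_space \<Rightarrow> complex"
  assumes "integrable lebesgue f" "g \<in> borel_measurable lebesgue" "\<And>x. norm (g x) \<le> B"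
  shows "integrable lebesgue (\<lambda>x. g x * f x)"
proof (rule Bochner_Integration.integrable_bound[where f="\<lambda>x. of_real B * f x"])
  show "integrable lebesgue (\<lambda>x. complex_of_real B * f x)" using assms(1) by simp
  show "(\<lambda>x. g x * f x) \<in> borel_measurable lebesgue"
    using assms(1,2) by (intro borel_measurable_times) (auto dest: borel_measurable_integrable)
  have "0 \<le> B" using assms(3) norm_ge_zero order_trans by blast
  then show "AE x in lebesgue. norm (g x * f x) \<le> norm (of_real B * f x)"
    using assms(3) by (auto simp: norm_mult intro!: mult_right_mono)
qed

lemma absolutely_integrable_bounded_continuous_times:
  fixes u :: "'a::euclidean_space \<Rightarrow> complex"
  assumes u: "u absolutely_integrable_on S" and g: "continuous_on UNIV g" "\<And>x. norm (g x) \<le> B"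
  shows "(\<lambda>x. g x * u x) absolutely_integrable_on S"
proof -
  have "(\<lambda>x. indicator S x *\<^sub>R (g x * u x)) = (\<lambda>x. g x * (indicator S x *\<^sub>R u x))"
    by (auto simp: indicator_def)
  moreover have "integrable lebesgue (\<lambda>x. g x * (indicator S x *\<^sub>R u x))"
    using u by (intro integrable_bounded_times[OF _ continuous_imp_borel_measurable_lebesgue[OF g(1)] g(2)])
       (simp add: set_integrable_def)
  ultimately show ?thesis
    by (simp add: set_integrable_def)
qed

locale vanishing_fourier_coeffs =
  fixes f :: "real^'d::finite \<Rightarrow> complex"
  assumes integrable: "integrable lebesgue f"
    and zero_outside: "\<And>\<theta>. \<theta> \<notin> open_torus \<Longrightarrow> f \<theta> = 0"
    and char_integral_zero: "\<And>k. (LINT \<theta>|lebesgue. torus_char k \<theta> * f \<theta>) = 0"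
begin

lemma integrable_continuous_times:
  assumes "continuous_on UNIV g" "\<And>\<theta>. norm (g \<theta>) \<le> B"
  shows "integrable lebesgue (\<lambda>\<theta>. g \<theta> * f \<theta>)"
  using integrable_bounded_times[OF integrable continuous_imp_borel_measurable_lebesgue] assms .

lemma trig_poly_integral_zero:
  "integrable lebesgue (\<lambda>\<theta>. trig_poly L \<theta> * f \<theta>) \<and> (LINT \<theta>|lebesgue. trig_poly L \<theta> * f \<theta>) = 0"
proof (induction L)
  case (Cons a L)
  obtain c k where a: "a = (c, k)" by force
  have "integrable lebesgue (\<lambda>\<theta>. torus_char k \<theta> * f \<theta>)"
    by (rule integrable_continuous_times[OF continuous_on_torus_char, where B=1]) simp
  then show ?case
    using Cons.IH char_integral_zero[of k] by (simp add: a distrib_right mult.assoc)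
qed simp

lemma integrable_polycircle_fn_times:
  fixes G :: "complex^'d \<Rightarrow> real"
  assumes G: "continuous_on polycircle G"
  shows "integrable lebesgue (\<lambda>\<theta>. of_real (G (cis_vec \<theta>)) * f \<theta>)"
proof -
  obtain B where B: "\<And>y. y \<in> polycircle \<Longrightarrow> norm (G y) \<le> B"
    using compact_imp_bounded[OF compact_continuous_image[OF G compact_polycircle]]
    unfolding bounded_iff by blast
  have "norm (complex_of_real (G (cis_vec \<theta>))) \<le> B" for \<theta>
    using B[OF cis_vec_in_polycircle] by simp
  then show ?thesis
    by (intro integrable_continuous_times continuous_intros continuous_on_compose2[OF G continuous_on_cis_vec])
       auto
qed

lemma continuous_integral_zero:
  fixes G :: "complex^'d \<Rightarrow> real"
  assumes G: "continuous_on polycircle G"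
  shows "(LINT \<theta>|lebesgue. of_real (G (cis_vec \<theta>)) * f \<theta>) = 0"
proof -
  define I where "I = (LINT \<theta>|lebesgue. of_real (G (cis_vec \<theta>)) * f \<theta>)"
  define N where "N = (LINT \<theta>|lebesgue. norm (f \<theta>))"
  have "N \<ge> 0" unfolding N_def by simp
  have Gf: "integrable lebesgue (\<lambda>\<theta>. of_real (G (cis_vec \<theta>)) * f \<theta>)"
    by (rule integrable_polycircle_fn_times[OF G])
  have "norm I \<le> e" if "e > 0" for e
  proof -
    obtain L where L: "\<And>\<theta>. norm (complex_of_real (G (cis_vec \<theta>)) - trig_poly L \<theta>) < e / (N + 1)"
      using trig_poly_approx[OF G] \<open>e > 0\<close> \<open>N \<ge> 0\<close> by (metis add_nonneg_pos divide_pos_pos zero_less_one)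
    have Lf: "integrable lebesgue (\<lambda>\<theta>. trig_poly L \<theta> * f \<theta>)" "(LINT \<theta>|lebesgue. trig_poly L \<theta> * f \<theta>) = 0"
      using trig_poly_integral_zero[of L] by auto
    have "I = (LINT \<theta>|lebesgue. (of_real (G (cis_vec \<theta>)) - trig_poly L \<theta>) * f \<theta>)"
      using Lf unfolding I_def left_diff_distrib by (simp add: Bochner_Integration.integral_diff[OF Gf])
    also have "norm \<dots> \<le> (LINT \<theta>|lebesgue. e / (N + 1) * norm (f \<theta>))"
    proof (rule Bochner_Integration.integral_norm_bound_integral)
      show "integrable lebesgue (\<lambda>\<theta>. (of_real (G (cis_vec \<theta>)) - trig_poly L \<theta>) * f \<theta>)"
        using Gf Lf(1) unfolding left_diff_distrib by (rule Bochner_Integration.integrable_diff)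
      show "norm ((of_real (G (cis_vec \<theta>)) - trig_poly L \<theta>) * f \<theta>) \<le> e / (N + 1) * norm (f \<theta>)" for \<theta>
        unfolding norm_mult using L[of \<theta>] by (intro mult_right_mono) auto
    qed (use integrable in simp)
    also have "\<dots> = e * (N / (N + 1))"
      by (simp add: N_def)
    also have "\<dots> \<le> e"
      using \<open>e > 0\<close> \<open>N \<ge> 0\<close> by (intro mult_left_le) auto
    finally show ?thesis .
  qed
  then have "norm I \<le> 0"
    using field_le_epsilon[of "norm I" 0] by simp
  then show ?thesis
    unfolding I_def by simp
qed

text \<open>The continuous functions \<open>min 1 (n * infdist y C)\<close> increase to the indicator of the
  complement of \<open>C\<close>.\<close>
lemma avoiding_closed_integral_zero:
  assumes C: "closed C" "C \<noteq> {}"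
  shows "(LINT \<theta>|lebesgue. indicator {\<theta>. cis_vec \<theta> \<notin> C} \<theta> *\<^sub>R f \<theta>) = 0"
proof -
  define G where "G n y = min 1 (real n * infdist y C)" for n :: nat and y
  define s where "s n \<theta> = complex_of_real (G n (cis_vec \<theta>)) * f \<theta>" for n \<theta>
  have G_cont: "continuous_on polycircle (G n)" for n
    unfolding G_def by (intro continuous_intros)
  have lim: "(\<lambda>n. s n \<theta>) \<longlonglongrightarrow> indicator {\<theta>. cis_vec \<theta> \<notin> C} \<theta> *\<^sub>R f \<theta>" for \<theta>
  proof (cases "cis_vec \<theta> \<in> C")
    case False
    then have d: "infdist (cis_vec \<theta>) C > 0"
      using infdist_pos_not_in_closed C by blast
    obtain N :: nat where N: "1 / infdist (cis_vec \<theta>) C \<le> real N"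
      using real_arch_simple by blast
    have "1 \<le> real n * infdist (cis_vec \<theta>) C" if "N \<le> n" for n
    proof -
      have "1 / infdist (cis_vec \<theta>) C \<le> real n"
        using N that by (meson of_nat_mono order.trans)
      with d show ?thesis by (simp add: pos_divide_le_eq)
    qed
    then have "s n \<theta> = indicator {\<theta>. cis_vec \<theta> \<notin> C} \<theta> *\<^sub>R f \<theta>" if "N \<le> n" for n
      using False that by (simp add: s_def G_def)
    then have "\<forall>\<^sub>F n in sequentially. s n \<theta> = indicator {\<theta>. cis_vec \<theta> \<notin> C} \<theta> *\<^sub>R f \<theta>"
      unfolding eventually_sequentially by blast
    then show ?thesis by (rule tendsto_eventually)
  qed (simp add: s_def G_def)
  have "(\<lambda>n. integral\<^sup>L lebesgue (s n)) \<longlonglongrightarrow> (LINT \<theta>|lebesgue. indicator {\<theta>. cis_vec \<theta> \<notin> C} \<theta> *\<^sub>R f \<theta>)"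
  proof (rule integral_dominated_convergence[where w="\<lambda>\<theta>. norm (f \<theta>)"])
    show s_meas: "s n \<in> borel_measurable lebesgue" for n
      using integrable_polycircle_fn_times[OF G_cont] unfolding s_def by (rule borel_measurable_integrable)
    show "(\<lambda>\<theta>. indicator {\<theta>. cis_vec \<theta> \<notin> C} \<theta> *\<^sub>R f \<theta>) \<in> borel_measurable lebesgue"
      using s_meas lim by (rule borel_measurable_LIMSEQ_metric)
    have "\<bar>G n y\<bar> \<le> 1" for n y
      using infdist_nonneg[of y C] by (simp add: G_def)
    then show "AE \<theta> in lebesgue. norm (s n \<theta>) \<le> norm (f \<theta>)" for n
      by (simp add: s_def norm_mult mult_left_le_one_le)
    show "integrable lebesgue (\<lambda>\<theta>. norm (f \<theta>))"
      using integrable by simp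
    show "AE \<theta> in lebesgue. (\<lambda>n. s n \<theta>) \<longlonglongrightarrow> indicator {\<theta>. cis_vec \<theta> \<notin> C} \<theta> *\<^sub>R f \<theta>"
      using lim by simp
  qed
  moreover have "integral\<^sup>L lebesgue (s n) = 0" for n
    unfolding s_def by (rule continuous_integral_zero[OF G_cont])
  ultimately show ?thesis
    by (simp add: LIMSEQ_const_iff)
qed

text \<open>On the open cube, the complement of a box is the preimage under \<^const>\<open>cis_vec\<close> of a
  closed union of arcs; outside the open cube \<open>f\<close> vanishes anyway.\<close>
lemma box_integral_zero: "(LINT \<theta>|lebesgue. indicator (box a b) \<theta> *\<^sub>R f \<theta>) = 0"
proof -
  define a' where "a' j = max (a $ j) (- pi)" for j
  define b' where "b' j = min (b $ j) pi" for j
  define C where "C = (\<Union>j. (\<lambda>y. y $ j) -` (cis ` {b' j..a' j + 2 * pi}))"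
  have C: "closed C"
    unfolding C_def
    by (intro closed_UN finite ballI closed_vimage_vec_nth compact_imp_closed compact_continuous_image
        continuous_intros) auto
  have "(\<chi> j. cis (b' j)) \<in> C"
    by (auto simp: C_def a'_def b'_def)
  then have zero: "(LINT \<theta>|lebesgue. indicator {\<theta>. cis_vec \<theta> \<notin> C} \<theta> *\<^sub>R f \<theta>) = 0"
    using avoiding_closed_integral_zero[OF C] by blast
  have "indicator (box a b) \<theta> *\<^sub>R f \<theta> = indicator {\<theta>. cis_vec \<theta> \<notin> C} \<theta> *\<^sub>R f \<theta>" for \<theta>
  proof (cases "\<theta> \<in> open_torus")
    case True
    then have "cis (\<theta> $ j) \<in> cis ` {b' j..a' j + 2 * pi} \<longleftrightarrow> \<not> (a' j < \<theta> $ j \<and> \<theta> $ j < b' j)" for j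
      by (intro cis_mem_arc_iff) (auto simp: mem_open_torus a'_def b'_def)
    then have "\<theta> \<in> box a b \<longleftrightarrow> cis_vec \<theta> \<notin> C"
      using True by (auto simp: C_def cis_vec_def mem_box_cart mem_open_torus a'_def b'_def)
    then show ?thesis by (simp add: indicator_def)
  qed (simp add: zero_outside)
  then have "(\<lambda>\<theta>. indicator (box a b) \<theta> *\<^sub>R f \<theta>) = (\<lambda>\<theta>. indicator {\<theta>. cis_vec \<theta> \<notin> C} \<theta> *\<^sub>R f \<theta>)"
    by (rule ext)
  with zero show ?thesis
    by simp
qed

lemma integral_zero: "(LINT \<theta>|lebesgue. f \<theta>) = 0"
  using char_integral_zero[of 0] by (simp add: torus_char_def ipS_def)

lemma borel_set_integral_zero:
  assumes "A \<in> sets borel"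
  shows "(LINT \<theta>:A|lebesgue. f \<theta>) = 0"
proof -
  let ?G = "range (\<lambda>(a, b). box a b :: (real^'d) set)"
  have "Int_stable ?G" by (auto simp: Int_stable_def box_Int_box)
  moreover have "?G \<subseteq> Pow UNIV" by auto
  moreover have "A \<in> sigma_sets UNIV ?G" using assms unfolding borel_eq_box by simp
  ultimately show ?thesis
  proof (induction rule: sigma_sets_induct_disjoint)
    case (basic A)
    then show ?case using box_integral_zero by (auto simp: set_lebesgue_integral_def)
  next
    case (compl A)
    then have "A \<in> sets borel"
      by (simp add: borel_eq_box)
    then have "A \<in> sets lebesgue"
      by (simp add: sets_completionI_sets flip: sets_lborel)
    then have "integrable lebesgue (\<lambda>x. indicator A x *\<^sub>R f x)"
      by (rule integrable_mult_indicator[OF _ integrable])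
    moreover have "indicator (UNIV - A) x *\<^sub>R f x = f x - indicator A x *\<^sub>R f x" for x
      by (auto simp: indicator_def)
    ultimately show ?case
      using compl.IH integral_zero integrable
      by (simp add: set_lebesgue_integral_def Bochner_Integration.integral_diff)
  next
    case (union F)
    then have "F i \<in> sets borel" for i
      by (auto simp: borel_eq_box)
    then have F: "F i \<in> sets lebesgue" for i
      by (simp add: sets_completionI_sets flip: sets_lborel)
    then have "set_integrable lebesgue (\<Union>i. F i) f"
      unfolding set_integrable_def by (intro integrable_mult_indicator[OF _ integrable]) blast
    then have "(LINT x:(\<Union>i. F i)|lebesgue. f x) = (\<Sum>i. (LINT x:(F i)|lebesgue. f x))"
      using F union.hyps(1) by (intro lebesgue_integral_countable_add) (auto simp: disjoint_family_on_def)
    then show ?case using union.IH by simp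
  qed (simp add: set_lebesgue_integral_def)
qed

lemma lebesgue_set_integral_zero:
  assumes A: "A \<in> sets lebesgue"
  shows "(LINT \<theta>:A|lebesgue. f \<theta>) = 0"
proof -
  obtain B N where BN: "B \<in> sets borel" "negligible N" "B \<union> N = A"
    using sets_lebesgue_almost_borel[OF A] by metis
  have B: "B \<in> sets lebesgue"
    using BN(1) by (simp add: sets_completionI_sets flip: sets_lborel)
  have "(LINT x:A|lebesgue. f x) = (LINT x:B|lebesgue. f x)"
  proof (rule set_integral_cong_set)
    show "set_borel_measurable lebesgue B f" "set_borel_measurable lebesgue A f"
      unfolding set_borel_measurable_def
      using integrable_mult_indicator[OF B integrable] integrable_mult_indicator[OF A integrable]
      by (auto intro: borel_measurable_integrable)
    have "AE x in lebesgue. x \<notin> N"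
      using BN(2) by (simp add: AE_not_in negligible_iff_null_sets)
    then show "AE x in lebesgue. (x \<in> B) = (x \<in> A)"
      using BN(3) by auto
  qed
  with borel_set_integral_zero[OF BN(1)] show ?thesis by simp
qed

lemma AE_zero: "AE \<theta> in lebesgue. f \<theta> = 0"
  by (rule sigma_finite_measure.density_zero[OF sigma_finite_lebesgue integrable lebesgue_set_integral_zero])

end

definition fourier_integral :: "(real^'d \<Rightarrow> complex) \<Rightarrow> int^'d \<Rightarrow> complex" where
  "fourier_integral u k = integral torus (\<lambda>\<theta>. exp (- \<i> * of_real (ipS UNIV k \<theta>)) * u \<theta>)"

lemma fourier_integral_eq_zero_iff_AE:
  fixes u :: "real^'d \<Rightarrow> complex"
  assumes u: "u absolutely_integrable_on torus"
  shows "(\<forall>k. fourier_integral u k = 0) \<longleftrightarrow> (AE \<theta> in lebesgue. \<theta> \<in> torus \<longrightarrow> u \<theta> = 0)"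
proof
  assume zero: "\<forall>k. fourier_integral u k = 0"
  have u_open: "u absolutely_integrable_on open_torus"
    using set_integrable_subset[OF u open_torus_sets_lebesgue open_torus_subset_torus] .
  have "(LINT \<theta>|lebesgue. torus_char k \<theta> * (indicator open_torus \<theta> *\<^sub>R u \<theta>)) = 0" for k
  proof -
    have "(\<lambda>\<theta>. torus_char k \<theta> * u \<theta>) absolutely_integrable_on open_torus"
      by (rule absolutely_integrable_bounded_continuous_times[OF u_open continuous_on_torus_char, where B=1])
         simp
    then have "(LINT \<theta>:open_torus|lebesgue. torus_char k \<theta> * u \<theta>) = integral open_torus (\<lambda>\<theta>. torus_char k \<theta> * u \<theta>)"
      by (rule set_lebesgue_integral_eq_integral)
    also have "\<dots> = integral torus (\<lambda>\<theta>. torus_char k \<theta> * u \<theta>)"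
      by (rule integral_subset_negligible[OF open_torus_subset_torus negligible_torus_diff_open_torus])
    also have "\<dots> = fourier_integral u (- k)"
      by (simp add: fourier_integral_def torus_char_def ipS_uminus)
    finally show ?thesis
      using zero by (simp add: set_lebesgue_integral_def mult.left_commute)
  qed
  then interpret vanishing_fourier_coeffs "\<lambda>\<theta>. indicator open_torus \<theta> *\<^sub>R u \<theta>"
    using u_open by unfold_locales (simp_all add: set_integrable_def)
  have "AE \<theta> in lebesgue. \<theta> \<notin> torus - open_torus"
    by (rule AE_not_in) (use negligible_torus_diff_open_torus in \<open>simp add: negligible_iff_null_sets\<close>)
  with AE_zero show "AE \<theta> in lebesgue. \<theta> \<in> torus \<longrightarrow> u \<theta> = 0"
    by eventually_elim (auto simp: indicator_def)
next
  assume "AE \<theta> in lebesgue. \<theta> \<in> torus \<longrightarrow> u \<theta> = 0"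
  then obtain N where N: "negligible N" "{\<theta>. \<not> (\<theta> \<in> torus \<longrightarrow> u \<theta> = 0)} \<subseteq> N"
    using eventually_ae_filter_negligible by metis
  have "fourier_integral u k = integral torus (\<lambda>_::real^'d. 0 :: complex)" for k
    unfolding fourier_integral_def
    by (rule integral_spike[OF N(1)]) (use N(2) in auto)
  then show "\<forall>k. fourier_integral u k = 0" by simp
qed

lemma fourier_integral_cnj: "cnj (fourier_integral u (- k)) = fourier_integral (\<lambda>\<theta>. cnj (u \<theta>)) k"
  unfolding fourier_integral_def integral_cnj by (simp add: exp_cnj ipS_uminus)

lemma fourier_integral_reflect: "fourier_integral u (- k) = fourier_integral (\<lambda>\<theta>. u (- \<theta>)) k"
proof -
  have torus_cbox: "integral torus g = integral (cbox (- pi_vec) pi_vec) g" for g :: "real^'d \<Rightarrow> complex"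
    by (rule integral_subset_negligible[OF torus_subset_cbox negligible_cbox_diff_torus])
  define g where "g \<theta> = exp (- \<i> * of_real (ipS UNIV k \<theta>)) * u (- \<theta>)" for \<theta>
  have "fourier_integral u (- k) = integral (cbox (- pi_vec) pi_vec) (\<lambda>\<theta>. g (- \<theta>))"
    unfolding fourier_integral_def torus_cbox g_def by (simp add: ipS_uminus ipS_uminus_right)
  also have "\<dots> = integral (cbox (- pi_vec) pi_vec) g"
    using integral_reflect[where f=g and a="- pi_vec" and b=pi_vec] by simp
  finally show ?thesis
    unfolding fourier_integral_def torus_cbox g_def .
qed

lemma fourier_integrand_integrable:
  fixes u :: "real^'d::finite \<Rightarrow> complex"
  assumes "u absolutely_integrable_on torus"
  shows "(\<lambda>\<theta>. exp (- \<i> * of_real (ipS UNIV k \<theta>)) * u \<theta>) integrable_on torus"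
proof -
  have "continuous_on UNIV (\<lambda>\<theta>::real^'d. exp (- \<i> * of_real (ipS UNIV k \<theta>)))"
    unfolding ipS_def by (intro continuous_intros)
  then show ?thesis
    using absolutely_integrable_bounded_continuous_times[OF assms, where B=1]
    by (simp add: set_lebesgue_integral_eq_integral(1))
qed

lemma fourier_integral_add:
  assumes "u absolutely_integrable_on torus" "v absolutely_integrable_on torus"
  shows "fourier_integral (\<lambda>\<theta>. u \<theta> + v \<theta>) k = fourier_integral u k + fourier_integral v k"
  unfolding fourier_integral_def
  using integral_add[OF fourier_integrand_integrable[OF assms(1)] fourier_integrand_integrable[OF assms(2)]]
  by (simp add: distrib_left)

lemma fourier_integral_diff:
  assumes "u absolutely_integrable_on torus" "v absolutely_integrable_on torus"
  shows "fourier_integral (\<lambda>\<theta>. u \<theta> - v \<theta>) k = fourier_integral u k - fourier_integral v k"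
  unfolding fourier_integral_def
  using integral_diff[OF fourier_integrand_integrable[OF assms(1)] fourier_integrand_integrable[OF assms(2)]]
  by (simp add: right_diff_distrib)

lemma absolutely_integrable_on_cnj:
  fixes u :: "'a::euclidean_space \<Rightarrow> complex"
  assumes "u absolutely_integrable_on S"
  shows "(\<lambda>x. cnj (u x)) absolutely_integrable_on S"
proof -
  have "(\<lambda>x. indicator S x *\<^sub>R cnj (u x)) = (\<lambda>x. cnj (indicator S x *\<^sub>R u x))"
    by (auto simp: indicator_def)
  with assms show ?thesis
    unfolding set_integrable_def by (simp only: complex_integrable_cnj)
qed

lemma absolutely_integrable_on_torus_reflect:
  fixes u :: "real^'d \<Rightarrow> complex"
  assumes "u absolutely_integrable_on torus"
  shows "(\<lambda>\<theta>. u (- \<theta>)) absolutely_integrable_on torus"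
proof -
  have torus_cbox: "g absolutely_integrable_on torus \<longleftrightarrow> g absolutely_integrable_on cbox (- pi_vec) pi_vec"
    for g :: "real^'d \<Rightarrow> complex"
    by (rule absolutely_integrable_spike_set_eq)
       (auto intro: negligible_subset[OF negligible_cbox_diff_torus] simp: torus_subset_cbox[THEN subsetD])
  have "(\<lambda>\<theta>. u (- \<theta>)) absolutely_integrable_on cbox (- pi_vec) (- (- pi_vec))"
    using assms by (simp only: absolutely_integrable_reflect torus_cbox)
  then show ?thesis
    by (simp add: torus_cbox)
qed

subsection \<open>Sandwich Fourier coefficients\<close>

definition neg_outside :: "'d set \<Rightarrow> int^'d \<Rightarrow> int^'d" where
  "neg_outside S k = (\<chi> j. if j \<in> S then k $ j else - k $ j)"

lemma neg_outside_neg_outside [simp]: "neg_outside S (neg_outside S k) = k"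
  by (simp add: neg_outside_def vec_eq_iff)

lemma neg_outside_uminus: "neg_outside S (- k) = - neg_outside S k"
  by (simp add: neg_outside_def vec_eq_iff)

lemma ipS_add_ipS_Compl: "ipS S k \<theta> + ipS (- S) k \<theta> = ipS UNIV k \<theta>"
proof -
  have "ipS UNIV k \<theta> = ipS (UNIV \<inter> S) k \<theta> + ipS (UNIV - S) k \<theta>"
    unfolding ipS_def by (rule sum.Int_Diff) simp
  then show ?thesis by (simp add: Compl_eq_Diff_UNIV)
qed

lemma ipS_neg_outside: "ipS UNIV (neg_outside S k) \<theta> = ipS S k \<theta> - ipS (- S) k \<theta>"
proof -
  have "ipS S (neg_outside S k) \<theta> = ipS S k \<theta>"
    unfolding ipS_def by (rule sum.cong) (auto simp: neg_outside_def)
  moreover have "ipS (- S) (neg_outside S k) \<theta> = - ipS (- S) k \<theta>"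
    unfolding ipS_def by (subst sum_negf[symmetric], rule sum.cong) (auto simp: neg_outside_def)
  ultimately show ?thesis
    using ipS_add_ipS_Compl[of S "neg_outside S k" \<theta>] by simp
qed

lemma qz_sandwich_integrand:
  "qz (sandwich_integrand SL Z W k p q \<theta>) = exp (- \<i> * of_real (ipS UNIV k \<theta>)) * Z \<theta> $ p $ q"
proof -
  have "exp (- \<i> * of_real (ipS SL k \<theta>)) * exp (- \<i> * of_real (ipS (- SL) k \<theta>))
      = exp (- \<i> * of_real (ipS UNIV k \<theta>))"
    unfolding ipS_add_ipS_Compl[of SL, symmetric]
    by (simp add: distrib_left exp_add exp_diff exp_minus divide_inverse)
  then show ?thesis
    by (simp add: sandwich_integrand_def qmul_def qof_complex_def qmatF_def mult.commute mult.left_commute)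
qed

text \<open>Since \<open>j z = cnj z j\<close>, the right exponential reaches the \<open>j\<close>-part conjugated.\<close>
lemma qw_sandwich_integrand:
  "qw (sandwich_integrand SL Z W k p q \<theta>) =
     exp (- \<i> * of_real (ipS UNIV (neg_outside SL k) \<theta>)) * W \<theta> $ p $ q"
proof -
  have "exp (- \<i> * of_real (ipS SL k \<theta>)) * cnj (exp (- \<i> * of_real (ipS (- SL) k \<theta>)))
      = exp (- \<i> * of_real (ipS UNIV (neg_outside SL k) \<theta>))"
    unfolding ipS_neg_outside
    by (simp add: exp_cnj right_diff_distrib exp_diff exp_minus divide_inverse)
  then show ?thesis
    by (simp add: sandwich_integrand_def qmul_def qof_complex_def qmatF_def mult.commute mult.left_commute)
qed

lemma sandwich_coeff_eq:
  fixes Z W :: "real^'d \<Rightarrow> complex^'s^'s"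
  shows "sandwich_coeff SL Z W k p q =
    Quat (of_real (1 / (2 * pi) ^ CARD('d)) * fourier_integral (\<lambda>\<theta>. Z \<theta> $ p $ q) k)
         (of_real (1 / (2 * pi) ^ CARD('d)) * fourier_integral (\<lambda>\<theta>. W \<theta> $ p $ q) (neg_outside SL k))"
  by (simp add: sandwich_coeff_def fourier_integral_def qz_sandwich_integrand qw_sandwich_integrand)

lemma all_toeplitz_hermitian_iff_sandwich_coeff:
  fixes Z W :: "real^'d \<Rightarrow> complex^'s^'s"
  shows "all_toeplitz_hermitian SL Z W \<longleftrightarrow>
     (\<forall>k p q. sandwich_coeff SL Z W k p q = qcnj (sandwich_coeff SL Z W (- k) q p))"
proof
  assume herm: "all_toeplitz_hermitian SL Z W"
  show "\<forall>k p q. sandwich_coeff SL Z W k p q = qcnj (sandwich_coeff SL Z W (- k) q p)"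
  proof (intro allI)
    fix k :: "int^'d" and p q :: 's
    define n :: "nat^'d" where "n = (\<chi> l. nat \<bar>k $ l\<bar> + 1)"
    define \<alpha> :: "nat^'d" where "\<alpha> = (\<chi> l. nat (k $ l))"
    define \<beta> :: "nat^'d" where "\<beta> = (\<chi> l. nat (- k $ l))"
    have "qhermitian (Lambda n \<times> UNIV) (toeplitzQ SL Z W)"
      using herm by (simp add: all_toeplitz_hermitian_def n_def)
    moreover have "(\<alpha>, p) \<in> Lambda n \<times> UNIV" "(\<beta>, q) \<in> Lambda n \<times> UNIV"
      by (auto simp: Lambda_def n_def \<alpha>_def \<beta>_def)
    ultimately have "toeplitzQ SL Z W (\<alpha>, p) (\<beta>, q) = qcnj (toeplitzQ SL Z W (\<beta>, q) (\<alpha>, p))"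
      unfolding qhermitian_def by blast
    moreover have "idx_diff \<alpha> \<beta> = k" "idx_diff \<beta> \<alpha> = - k"
      by (simp_all add: idx_diff_def \<alpha>_def \<beta>_def vec_eq_iff)
    ultimately show "sandwich_coeff SL Z W k p q = qcnj (sandwich_coeff SL Z W (- k) q p)"
      by (simp add: toeplitzQ_def)
  qed
next
  assume symm: "\<forall>k p q. sandwich_coeff SL Z W k p q = qcnj (sandwich_coeff SL Z W (- k) q p)"
  have swap: "idx_diff \<beta> \<alpha> = - idx_diff \<alpha> \<beta>" for \<alpha> \<beta> :: "nat^'d"
    by (simp add: idx_diff_def vec_eq_iff)
  have "toeplitzQ SL Z W x y = qcnj (toeplitzQ SL Z W y x)" for x y
    unfolding toeplitzQ_def swap[of "fst y" "fst x"] by (rule symm[rule_format])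
  then show "all_toeplitz_hermitian SL Z W"
    unfolding all_toeplitz_hermitian_def qhermitian_def by blast
qed

lemma sandwich_coeff_eq_qcnj_iff:
  fixes Z W :: "real^'d \<Rightarrow> complex^'s^'s"
  assumes Z: "\<forall>p q. (\<lambda>\<theta>. Z \<theta> $ p $ q) absolutely_integrable_on torus"
      and W: "\<forall>p q. (\<lambda>\<theta>. W \<theta> $ p $ q) absolutely_integrable_on torus"
  shows "sandwich_coeff SL Z W k p q = qcnj (sandwich_coeff SL Z W (- k) q p) \<longleftrightarrow>
    fourier_integral (\<lambda>\<theta>. Z \<theta> $ p $ q - cnj (Z \<theta> $ q $ p)) k = 0 \<and>
    fourier_integral (\<lambda>\<theta>. W \<theta> $ p $ q + W (- \<theta>) $ q $ p) (neg_outside SL k) = 0"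
proof -
  define c where "c = complex_of_real (1 / (2 * pi) ^ CARD('d))"
  have "c \<noteq> 0" "cnj c = c"
    by (simp_all add: c_def)
  then have cancel: "c * x = cnj (c * y) \<longleftrightarrow> x - cnj y = 0" "c * x = - (c * y) \<longleftrightarrow> x + y = 0" for x y
    by (simp_all add: eq_neg_iff_add_eq_0 flip: distrib_left)
  have "fourier_integral (\<lambda>\<theta>. Z \<theta> $ p $ q - cnj (Z \<theta> $ q $ p)) k
      = fourier_integral (\<lambda>\<theta>. Z \<theta> $ p $ q) k - cnj (fourier_integral (\<lambda>\<theta>. Z \<theta> $ q $ p) (- k))"
    using fourier_integral_diff[OF Z[rule_format] absolutely_integrable_on_cnj[OF Z[rule_format]]]
    by (simp add: fourier_integral_cnj)
  moreover have "fourier_integral (\<lambda>\<theta>. W \<theta> $ p $ q + W (- \<theta>) $ q $ p) m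
      = fourier_integral (\<lambda>\<theta>. W \<theta> $ p $ q) m + fourier_integral (\<lambda>\<theta>. W \<theta> $ q $ p) (- m)" for m
    using fourier_integral_add[OF W[rule_format] absolutely_integrable_on_torus_reflect[OF W[rule_format]]]
    by (simp add: fourier_integral_reflect)
  ultimately show ?thesis
    unfolding sandwich_coeff_eq qcnj_def c_def[symmetric] quat.sel quat.inject cancel neg_outside_uminus
    by simp
qed

lemma all_toeplitz_hermitian_iff:
  fixes Z W :: "real^'d \<Rightarrow> complex^'s^'s"
  assumes Z: "\<forall>p q. (\<lambda>\<theta>. Z \<theta> $ p $ q) absolutely_integrable_on torus"
      and W: "\<forall>p q. (\<lambda>\<theta>. W \<theta> $ p $ q) absolutely_integrable_on torus"
  shows "all_toeplitz_hermitian SL Z W \<longleftrightarrow>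
           (AE \<theta> in lebesgue. \<theta> \<in> torus \<longrightarrow> (\<forall>p q. Z \<theta> $ p $ q = cnj (Z \<theta> $ q $ p))) \<and>
           (AE \<theta> in lebesgue. \<theta> \<in> torus \<longrightarrow> (\<forall>p q. W (- \<theta>) $ p $ q = - (W \<theta> $ q $ p)))"
proof -
  define DZ where "DZ p q \<theta> = Z \<theta> $ p $ q - cnj (Z \<theta> $ q $ p)" for p q \<theta>
  define DW where "DW p q \<theta> = W \<theta> $ p $ q + W (- \<theta>) $ q $ p" for p q \<theta>
  have DZ_integrable: "DZ p q absolutely_integrable_on torus" for p q
    unfolding DZ_def using Z absolutely_integrable_on_cnj by (intro set_integral_diff(1)) auto
  have DW_integrable: "DW p q absolutely_integrable_on torus" for p q
    unfolding DW_def using W absolutely_integrable_on_torus_reflect by (intro set_integral_add(1)) auto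
  have Z_iff: "(\<forall>p q. \<theta> \<in> torus \<longrightarrow> DZ p q \<theta> = 0) \<longleftrightarrow>
      (\<theta> \<in> torus \<longrightarrow> (\<forall>p q. Z \<theta> $ p $ q = cnj (Z \<theta> $ q $ p)))" for \<theta>
    by (auto simp: DZ_def)
  have W_iff: "(\<forall>p q. \<theta> \<in> torus \<longrightarrow> DW q p \<theta> = 0) \<longleftrightarrow>
      (\<theta> \<in> torus \<longrightarrow> (\<forall>p q. W (- \<theta>) $ p $ q = - (W \<theta> $ q $ p)))" for \<theta>
    by (auto simp: DW_def eq_neg_iff_add_eq_0 add.commute)
  have "all_toeplitz_hermitian SL Z W \<longleftrightarrow>
      (\<forall>p q. \<forall>k. fourier_integral (DZ p q) k = 0 \<and> fourier_integral (DW p q) (neg_outside SL k) = 0)"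
    unfolding all_toeplitz_hermitian_iff_sandwich_coeff sandwich_coeff_eq_qcnj_iff[OF Z W] DZ_def DW_def
    by blast
  also have "\<dots> \<longleftrightarrow> (\<forall>p q. (\<forall>k. fourier_integral (DZ p q) k = 0) \<and> (\<forall>k. fourier_integral (DW p q) k = 0))"
    by (metis neg_outside_neg_outside)
  also have "\<dots> \<longleftrightarrow> (\<forall>p q. (AE \<theta> in lebesgue. \<theta> \<in> torus \<longrightarrow> DZ p q \<theta> = 0) \<and>
                            (AE \<theta> in lebesgue. \<theta> \<in> torus \<longrightarrow> DW p q \<theta> = 0))"
    by (simp only: fourier_integral_eq_zero_iff_AE[OF DZ_integrable] fourier_integral_eq_zero_iff_AE[OF DW_integrable])
  also have "\<dots> \<longleftrightarrow> (AE \<theta> in lebesgue. \<forall>p q. \<theta> \<in> torus \<longrightarrow> DZ p q \<theta> = 0) \<and>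
                    (AE \<theta> in lebesgue. \<forall>p q. \<theta> \<in> torus \<longrightarrow> DW q p \<theta> = 0)"
    unfolding AE_all_countable by blast
  also have "\<dots> \<longleftrightarrow>
      (AE \<theta> in lebesgue. \<theta> \<in> torus \<longrightarrow> (\<forall>p q. Z \<theta> $ p $ q = cnj (Z \<theta> $ q $ p))) \<and>
      (AE \<theta> in lebesgue. \<theta> \<in> torus \<longrightarrow> (\<forall>p q. W (- \<theta>) $ p $ q = - (W \<theta> $ q $ p)))"
    by (simp only: Z_iff W_iff)
  finally show ?thesis .
qed

theorem mainTheorem8:
  fixes Z W :: "real^'d \<Rightarrow> complex^'s^'s" and SL :: "'d set"
  assumes "\<forall>p q. (\<lambda>\<theta>. Z \<theta> $ p $ q) absolutely_integrable_on torus"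
      and "\<forall>p q. (\<lambda>\<theta>. W \<theta> $ p $ q) absolutely_integrable_on torus"
  shows "(all_toeplitz_hermitian SL Z W \<longleftrightarrow>
            ((AE \<theta> in lebesgue. \<theta> \<in> torus \<longrightarrow> (\<forall>p q. Z \<theta> $ p $ q = cnj (Z \<theta> $ q $ p))) \<and>
             (AE \<theta> in lebesgue. \<theta> \<in> torus \<longrightarrow> (\<forall>p q. W (- \<theta>) $ p $ q = - (W \<theta> $ q $ p)))))
         \<and> (\<forall>SL'. all_toeplitz_hermitian SL Z W \<longleftrightarrow> all_toeplitz_hermitian SL' Z W)"
  using all_toeplitz_hermitian_iff[OF assms] by blast

end
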